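(* (i) Let $(s,p)\in R_{\Lambda,i}$. Then \[ \frac{\prod_{p'=1}^{i+1}L^{(s)}_{+,p'}}{\prod_{1\le p'\le i,\ p'\ne p}(\nu^{(s)}_{i,p}-\nu^{(s)}_{i,p'})}=\hbar'^2(p-i-1), \] and for $s'\ne s$, with $\Delta=a_s-a_{s'}$, \[ \frac{\prod_{p'=1}^{i+1}L^{(s')}_{+,p'}}{\prod_{p'=1}^{i}(\nu^{(s)}_{i,p}-\nu^{(s')}_{i,p'})}=\begin{cases}\hbar'(p-i-1)-\Delta&\text{if }l^{(s')}_{i+1}=l^{(s')}_i,\\ \hbar'(p-i)-\Delta&\text{if }l^{(s')}_{i+1}=l^{(s')}_i+1,\ l^{(s')}_i=i,\\ \dfrac{(\hbar'(p-l^{(s')}_i)-\Delta)(\hbar'(p-i-1)-\Delta)}{\hbar'(p-l^{(s')}_i-1)-\Delta}&\text{if }l^{(s')}_{i+1}=l^{(s')}_i+1,\ l^{(s')}_i\ne i.\end{cases} \] (ii) Let $(s,p)\in A_{\Lambda,i}$. Then \[ \frac{\prod_{p'=1}^{i-1}L^{(s)}_{-,p'}}{\prod_{1\le p'\le i,\ p'\ne p}(\nu^{(s)}_{i,p}-\nu^{(s)}_{i,p'})}=-\frac1{p-i-1}, \] and for $s'\ne s$, with $\Delta=a_s-a_{s'}$, \[ \frac{\prod_{p'=1}^{i-1}L^{(s')}_{-,p'}}{\prod_{p'=1}^{i}(\nu^{(s)}_{i,p}-\nu^{(s')}_{i,p'})}=\begin{cases}\dfrac1{\hbar'(p-i-1)-\Delta}&\text{if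 }l^{(s')}_{i-1}=l^{(s')}_i,\\ \dfrac1{\hbar'(p-i)-\Delta}&\text{if }l^{(s')}_{i-1}=l^{(s')}_i-1,\ l^{(s')}_i=i,\\ \dfrac{\hbar'(p-l^{(s')}_i-1)-\Delta}{(\hbar'(p-l^{(s')}_i)-\Delta)(\hbar'(p-i-1)-\Delta)}&\text{if }l^{(s')}_{i-1}=l^{(s')}_i-1,\ l^{(s')}_i\ne i.\end{cases} \]
   Context: Work over $\mathbb{C}(\varepsilon_1,\varepsilon_2)$ with $\hbar'=-(\varepsilon_1+\varepsilon_2)$, $t=N\varepsilon_2$, $N\ge2$. Fix $l\ge1$, integers $1\le p_1,\dots,p_l\le N$ and integers $r_1<\dots<r_l$, and set $a_s=tr_s+\hbar'(p_1+\cdots+p_s-\frac32)$. Let $\mathcal S$ be the set of collections of integers $\Lambda=(\lambda^{(s)}_{i,p})$, $1\le s\le l$, $1\le i\le N$, $1\le p\le i$, with $\lambda^{(s)}_{N,p}=1$ for $p\le p_s$ and $0$ for $p>p_s$, and $\lambda^{(s)}_{i,p}\ge\lambda^{(s)}_{i-1,p}\ge\lambda^{(s)}_{i,p+1}$ (so all entries are $0$ or $1$); put $\lambda^{(s)}_{i,p}=0$ for $p>i$. Let $l^{(s)}_i$ be the number of $p$ with $\lambda^{(s)}_{i,p}=1$. For $\Lambda\in\mathcal S$ and $1\le i\le N-1$, $\Lambda\pm\delta^{(s)}_{i,p}$ denotes $\Lambda$ with the $(s,i,p)$ entry changed by $\pm1$; $R_{\Lambda,i}=\{(s,p):\Lambda+\delta^{(s)}_{i,p}\in\mathcal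 S\}$, $A_{\Lambda,i}=\{(s,p):\Lambda-\delta^{(s)}_{i,p}\in\mathcal S\}$. Set $\nu^{(s)}_{i,p}=\hbar'(p-1-\lambda^{(s)}_{i,p})-a_s$, and for fixed $(s,i,p)$ and any $(s',p')$: $L^{(s')}_{+,p'}=\hbar'(p-p'+\lambda^{(s')}_{i+1,p'})-(a_s-a_{s'})$, $L^{(s')}_{-,p'}=\hbar'(p-p'-1+\lambda^{(s')}_{i-1,p'})-(a_s-a_{s'})$ (empty products are $1$). *)

theory Defs
  imports Complex_Main "HOL-Computational_Algebra.Polynomial" "HOL-Computational_Algebra.Fraction_Field"
begin

text \<open>The base field C(eps1, eps2), realised as the fraction field of C[eps1][eps2].\<close>
type_synonym ratfun = "complex poly poly fract"

definition eps1 :: ratfun where "eps1 = Fract [:[:0, 1:]:] 1"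
definition eps2 :: ratfun where "eps2 = Fract [:0, 1:] 1"

definition hb :: ratfun where "hb = - (eps1 + eps2)"
definition tt :: "nat \<Rightarrow> ratfun" where "tt N = of_nat N * eps2"

definition aa :: "nat \<Rightarrow> (nat \<Rightarrow> nat) \<Rightarrow> (nat \<Rightarrow> int) \<Rightarrow> nat \<Rightarrow> ratfun" where
  "aa N pp r s = tt N * of_int (r s) + hb * (of_nat (\<Sum>j = 1..s. pp j) - 3 / 2)"

text \<open>Collections Lambda = (lambda^(s)_{i,p}) are represented as functions s i p, extended
  by zero outside the index domain 1<=s<=l, 1<=i<=N, 1<=p<=i.\<close>
type_synonym pattern = "nat \<Rightarrow> nat \<Rightarrow> nat \<Rightarrow> int"

definition GT :: "nat \<Rightarrow> nat \<Rightarrow> (nat \<Rightarrow> nat) \<Rightarrow> pattern set" where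
  "GT N l pp = {lam.
     (\<forall>s i p. \<not> (1 \<le> s \<and> s \<le> l \<and> 1 \<le> i \<and> i \<le> N \<and> 1 \<le> p \<and> p \<le> i) \<longrightarrow> lam s i p = 0) \<and>
     (\<forall>s\<in>{1..l}. \<forall>p\<in>{1..N}. lam s N p = (if p \<le> pp s then 1 else 0)) \<and>
     (\<forall>s\<in>{1..l}. \<forall>i\<in>{2..N}. \<forall>p\<in>{1..i-1}.
        lam s i p \<ge> lam s (i-1) p \<and> lam s (i-1) p \<ge> lam s i (p+1))}"

definition shift :: "pattern \<Rightarrow> nat \<Rightarrow> nat \<Rightarrow> nat \<Rightarrow> int \<Rightarrow> pattern" where
  "shift lam s i p c = (\<lambda>s' i' p'. if (s', i', p') = (s, i, p) then lam s' i' p' + c else lam s' i' p')"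

definition Rset :: "nat \<Rightarrow> nat \<Rightarrow> (nat \<Rightarrow> nat) \<Rightarrow> pattern \<Rightarrow> nat \<Rightarrow> (nat \<times> nat) set" where
  "Rset N l pp lam i = {(s, p). shift lam s i p 1 \<in> GT N l pp}"

definition Aset :: "nat \<Rightarrow> nat \<Rightarrow> (nat \<Rightarrow> nat) \<Rightarrow> pattern \<Rightarrow> nat \<Rightarrow> (nat \<times> nat) set" where
  "Aset N l pp lam i = {(s, p). shift lam s i p (-1) \<in> GT N l pp}"

definition lcnt :: "pattern \<Rightarrow> nat \<Rightarrow> nat \<Rightarrow> nat" where
  "lcnt lam s i = card {p \<in> {1..i}. lam s i p = 1}"

definition nu :: "nat \<Rightarrow> (nat \<Rightarrow> nat) \<Rightarrow> (nat \<Rightarrow> int) \<Rightarrow> pattern \<Rightarrow> nat \<Rightarrow> nat \<Rightarrow> nat \<Rightarrow> ratfun" where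
  "nu N pp r lam s i p = hb * of_int (int p - 1 - lam s i p) - aa N pp r s"

definition Lp :: "nat \<Rightarrow> (nat \<Rightarrow> nat) \<Rightarrow> (nat \<Rightarrow> int) \<Rightarrow> pattern \<Rightarrow> nat \<Rightarrow> nat \<Rightarrow> nat \<Rightarrow> nat \<Rightarrow> nat \<Rightarrow> ratfun" where
  "Lp N pp r lam s i p s' p' =
     hb * of_int (int p - int p' + lam s' (i+1) p') - (aa N pp r s - aa N pp r s')"

definition Lm :: "nat \<Rightarrow> (nat \<Rightarrow> nat) \<Rightarrow> (nat \<Rightarrow> int) \<Rightarrow> pattern \<Rightarrow> nat \<Rightarrow> nat \<Rightarrow> nat \<Rightarrow> nat \<Rightarrow> nat \<Rightarrow> ratfun" where
  "Lm N pp r lam s i p s' p' =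
     hb * of_int (int p - int p' - 1 + lam s' (i-1) p') - (aa N pp r s - aa N pp r s')"

end

theory Submission
  imports Defs
begin

text \<open>Since all entries of a pattern are 0 or 1 and rows decrease weakly, row \<open>j\<close> of layer \<open>s\<close>
  is the indicator of \<open>{1..l^(s)_j}\<close>, and interlacing gives
  \<open>l^(s)_j \<le> l^(s)_(j+1) \<le> l^(s)_j + 1\<close>. Hence every factor of the four products has the form
  \<open>hb * k - D\<close> where \<open>k\<close> runs over an integer interval with one point removed, that point being
  fixed by a row length. The quotients telescope to at most three such factors, and the
  remaining factors do not vanish because \<open>eps1, eps2\<close> are independent while the \<open>eps2\<close>-part
  of \<open>a_s - a_s'\<close> is \<open>N (r_s - r_s') \<noteq> 0\<close>.\<close>

section \<open>Non-vanishing of the linear factors\<close>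

lemma of_int_fract: "(of_int x :: 'a::idom fract) = Fract (of_int x) 1"
proof (cases x rule: int_cases)
  case (nonneg n) then show ?thesis by (simp add: of_nat_fract)
next
  case (neg n) then show ?thesis by (simp add: of_nat_fract One_fract_def)
qed

lemma eps_linear_independent:
  assumes "of_int x * eps1 + of_int y * eps2 = 0"
  shows "x = 0 \<and> y = 0"
proof -
  let ?q = "of_int x * [:[:0,1:]:] + of_int y * [:0,1:] :: complex poly poly"
  have "of_int x * eps1 + of_int y * eps2 = Fract ?q 1"
    by (simp add: eps1_def eps2_def of_int_fract)
  with assms have "?q = 0"
    by (simp add: Zero_fract_def eq_fract)
  then have "coeff (coeff ?q 0) 1 = 0" and "coeff (coeff ?q 1) 0 = 0"
    by simp_all
  then show ?thesis by (simp add: of_int_poly)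
qed

lemma hb_mult_of_int_nonzero: "k \<noteq> 0 \<Longrightarrow> hb * of_int k \<noteq> 0"
  using eps_linear_independent[of "-k" "-k"] by (auto simp: hb_def algebra_simps)

lemma hb_nonzero: "hb \<noteq> 0"
  using hb_mult_of_int_nonzero[of 1] by simp

lemma hb_mult_of_int_minus_aa_nonzero:
  assumes "N \<noteq> 0" and "r s \<noteq> r s'"
  shows "hb * of_int k - (aa N pp r s - aa N pp r s') \<noteq> 0"
proof
  define \<sigma> where "\<sigma> = int (\<Sum>j = 1..s. pp j) - int (\<Sum>j = 1..s'. pp j)"
  assume "hb * of_int k - (aa N pp r s - aa N pp r s') = 0"
  moreover have "hb * of_int k - (aa N pp r s - aa N pp r s')
     = of_int (\<sigma> - k) * eps1 + of_int (\<sigma> - k - int N * (r s - r s')) * eps2"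
    unfolding \<sigma>_def aa_def tt_def hb_def by (simp add: algebra_simps)
  ultimately have "of_int (\<sigma> - k) * eps1 + of_int (\<sigma> - k - int N * (r s - r s')) * eps2 = 0"
    by simp
  from eps_linear_independent[OF this] show False
    using assms by auto
qed

section \<open>Products over a row with one removed point\<close>

text \<open>For a row \<open>\<lambda>\<close> that is the indicator of \<open>{1..m}\<close>, \<open>c - q + \<lambda>_q\<close> is the quantity
  entering both \<open>L\<^sub>\<pm>\<close> and the differences of the \<open>\<nu>\<close>.\<close>

definition row_shift :: "int \<Rightarrow> nat \<Rightarrow> nat \<Rightarrow> int" where
  "row_shift c m q = c - int q + (if q \<le> m then 1 else 0)"

lemma inj_on_row_shift: "inj_on (row_shift c m) A"
  unfolding inj_on_def row_shift_def by (auto split: if_splits)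

lemma row_shift_image:
  assumes "m \<le> n"
  shows "row_shift c m ` {1..n} = {c - int n..c} - {c - int m}"
proof
  show "row_shift c m ` {1..n} \<subseteq> {c - int n..c} - {c - int m}"
    unfolding row_shift_def by (auto split: if_splits)
  show "{c - int n..c} - {c - int m} \<subseteq> row_shift c m ` {1..n}"
  proof
    fix k assume k: "k \<in> {c - int n..c} - {c - int m}"
    define q where "q = (if k > c - int m then nat (c - k + 1) else nat (c - k))"
    have "k = row_shift c m q" "q \<in> {1..n}"
      using k assms unfolding q_def row_shift_def by auto
    then show "k \<in> row_shift c m ` {1..n}" by blast
  qed
qed

lemma prod_row_shift:
  "m \<le> n \<Longrightarrow> (\<Prod>q\<in>{1..n}. g (row_shift c m q)) = (\<Prod>k\<in>{c - int n..c} - {c - int m}. g k)"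
  by (metis row_shift_image inj_on_row_shift prod.reindex_cong)

lemma prod_row_shift_remove:
  assumes "m \<le> n" and "q \<in> {1..n}"
  shows "(\<Prod>q'\<in>{1..n} - {q}. g (row_shift c m q'))
       = (\<Prod>k\<in>{c - int n..c} - {c - int m} - {row_shift c m q}. g k)"
proof -
  have "row_shift c m ` ({1..n} - {q}) = row_shift c m ` {1..n} - {row_shift c m q}"
    by (simp add: image_set_diff[OF inj_on_row_shift])
  then have "row_shift c m ` ({1..n} - {q}) = {c - int n..c} - {c - int m} - {row_shift c m q}"
    using row_shift_image[OF assms(1)] by simp
  then show ?thesis by (metis inj_on_row_shift prod.reindex_cong)
qed

lemma prod_row_shift_insert:
  assumes "m \<le> n"
  shows "(\<Prod>q\<in>{1..n}. g (row_shift c m q)) * g (c - int m) = (\<Prod>k\<in>{c - int n..c}. g k)"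
  using prod_row_shift[OF assms, of g c] prod.remove[of "{c - int n..c}" "c - int m" g] assms
  by (simp add: mult.commute)

lemma prod_row_shift_quotient_succ:
  fixes F :: "int \<Rightarrow> 'a::field"
  assumes nz: "\<And>k. F k \<noteq> 0" and "m \<le> n" "m' \<le> n + 1"
  shows "(\<Prod>q\<in>{1..n+1}. F (row_shift c m' q)) / (\<Prod>q\<in>{1..n}. F (row_shift c m q))
     = F (c - int m) * F (c - int n - 1) / F (c - int m')"
proof -
  let ?W = "\<Prod>k\<in>{c - int n..c}. F k"
  have "{c - int (n+1)..c} = insert (c - int n - 1) {c - int n..c}" by auto
  then have "(\<Prod>q\<in>{1..n+1}. F (row_shift c m' q)) * F (c - int m') = F (c - int n - 1) * ?W"
    using prod_row_shift_insert[OF assms(3), of F c] by simp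
  moreover have "(\<Prod>q\<in>{1..n}. F (row_shift c m q)) * F (c - int m) = ?W"
    using prod_row_shift_insert[OF assms(2)] .
  moreover have "?W \<noteq> 0" using nz by (simp add: prod_zero_iff)
  ultimately show ?thesis using nz by (simp add: field_simps)
qed

lemma prod_row_shift_quotient_pred:
  fixes F :: "int \<Rightarrow> 'a::field"
  assumes nz: "\<And>k. F k \<noteq> 0" and "1 \<le> n" "m \<le> n" "m' \<le> n - 1"
  shows "(\<Prod>q\<in>{1..n-1}. F (row_shift c m' q)) / (\<Prod>q\<in>{1..n}. F (row_shift c m q))
     = F (c - int m) / (F (c - int n) * F (c - int m'))"
proof -
  let ?V = "\<Prod>k\<in>{c - int n + 1..c}. F k"
  have "{c - int (n - 1)..c} = {c - int n + 1..c}" using assms(2) by (simp add: of_nat_diff)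
  from prod_row_shift_insert[OF assms(4), of F c, unfolded this]
  have "(\<Prod>q\<in>{1..n-1}. F (row_shift c m' q)) * F (c - int m') = ?V" .
  moreover have "{c - int n..c} = insert (c - int n) {c - int n + 1..c}" by auto
  then have "(\<Prod>q\<in>{1..n}. F (row_shift c m q)) * F (c - int m) = F (c - int n) * ?V"
    using prod_row_shift_insert[OF assms(3), of F c] by simp
  moreover have "?V \<noteq> 0" using nz by (simp add: prod_zero_iff)
  ultimately show ?thesis using nz by (simp add: field_simps)
qed

text \<open>In the two diagonal quotients the removed factor is \<open>F 0\<close>, so \<open>F\<close> may vanish at \<open>0\<close>.\<close>

lemma prod_row_shift_quotient_succ_diag:
  fixes F :: "int \<Rightarrow> 'a::field"
  assumes nz: "\<And>k. k \<noteq> 0 \<Longrightarrow> F k \<noteq> 0" and "1 \<le> p" "p \<le> n"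
  shows "(\<Prod>q\<in>{1..n+1}. F (row_shift (int p) p q)) / (\<Prod>q\<in>{1..n} - {p}. F (row_shift (int p) (p - 1) q))
     = F (int p - int n - 1) * F 1"
proof -
  let ?T = "{int p - int n..int p} - {1} - {0}"
  have "{int p - int (n+1)..int p} - {int p - int p} = insert (int p - int n - 1) (insert 1 ?T)"
    using assms by auto
  then have "(\<Prod>q\<in>{1..n+1}. F (row_shift (int p) p q)) = F (int p - int n - 1) * (F 1 * prod F ?T)"
    using prod_row_shift[of p "n+1" F "int p"] assms by simp
  moreover have "{int p - int n..int p} - {int p - int (p - 1)} - {row_shift (int p) (p - 1) p} = ?T"
    using assms by (auto simp: row_shift_def)
  then have "(\<Prod>q\<in>{1..n} - {p}. F (row_shift (int p) (p - 1) q)) = prod F ?T"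
    using prod_row_shift_remove[of "p - 1" n p F "int p"] assms by simp
  moreover have "prod F ?T \<noteq> 0" using nz by (simp add: prod_zero_iff)
  ultimately show ?thesis by simp
qed

lemma prod_row_shift_quotient_pred_diag:
  fixes F :: "int \<Rightarrow> 'a::field"
  assumes nz: "\<And>k. k \<noteq> 0 \<Longrightarrow> F k \<noteq> 0" and "1 \<le> p" "p \<le> n"
  shows "(\<Prod>q\<in>{1..n-1}. F (row_shift (int p - 1) (p - 1) q)) / (\<Prod>q\<in>{1..n} - {p}. F (row_shift (int p - 1) p q))
     = F (-1) / F (int p - 1 - int n)"
proof -
  let ?U = "{int p - 1 - int n..int p - 1} - {0}"
  let ?A = "{int p - int n..int p - 1} - {0}"
  let ?B = "{int p - 1 - int n..int p - 1} - {-1} - {0}"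
  have "{int p - 1 - int (n - 1)..int p - 1} - {int p - 1 - int (p - 1)} = ?A"
    using assms by auto
  then have num: "(\<Prod>q\<in>{1..n-1}. F (row_shift (int p - 1) (p - 1) q)) = prod F ?A"
    using prod_row_shift[of "p - 1" "n - 1" F "int p - 1"] assms by simp
  have "{int p - 1 - int n..int p - 1} - {int p - 1 - int p} - {row_shift (int p - 1) p p} = ?B"
    using assms by (auto simp: row_shift_def)
  then have den: "(\<Prod>q\<in>{1..n} - {p}. F (row_shift (int p - 1) p q)) = prod F ?B"
    using prod_row_shift_remove[of p n p F "int p - 1"] assms by simp
  have "?U = insert (int p - 1 - int n) ?A" and "?U = insert (-1) ?B"
    using assms by auto
  then have "F (int p - 1 - int n) * prod F ?A = F (-1) * prod F ?B"
    using prod.insert[of ?A "int p - 1 - int n" F] prod.insert[of ?B "-1" F] by auto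
  moreover have "prod F ?B \<noteq> 0" "F (int p - 1 - int n) \<noteq> 0"
    using nz assms by (simp_all add: prod_zero_iff)
  ultimately show ?thesis unfolding num den by (simp add: field_simps)
qed

section \<open>Rows of 0/1 Gelfand--Tsetlin patterns\<close>

lemma GT_outside:
  "lam \<in> GT N l pp \<Longrightarrow> \<not> (1 \<le> s \<and> s \<le> l \<and> 1 \<le> i \<and> i \<le> N \<and> 1 \<le> p \<and> p \<le> i) \<Longrightarrow> lam s i p = 0"
  unfolding GT_def by blast

lemma GT_top_row:
  "lam \<in> GT N l pp \<Longrightarrow> s \<in> {1..l} \<Longrightarrow> p \<in> {1..N} \<Longrightarrow> lam s N p = (if p \<le> pp s then 1 else 0)"
  unfolding GT_def by blast

lemma GT_interlacing:
  "lam \<in> GT N l pp \<Longrightarrow> s \<in> {1..l} \<Longrightarrow> i \<in> {2..N} \<Longrightarrow> p \<in> {1..i-1} \<Longrightarrow>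
   lam s (i-1) p \<le> lam s i p \<and> lam s i (p+1) \<le> lam s (i-1) p"
  unfolding GT_def by blast

lemma GT_row_01_antimono:
  assumes G: "lam \<in> GT N l pp" and s: "s \<in> {1..l}" and "j \<le> N"
  shows "(\<forall>p\<in>{1..j}. lam s j p = 0 \<or> lam s j p = 1)
       \<and> (\<forall>p q. 1 \<le> p \<longrightarrow> p \<le> q \<longrightarrow> q \<le> j \<longrightarrow> lam s j q \<le> lam s j p)"
  using \<open>j \<le> N\<close>
proof (induction j rule: inc_induct)
  case base
  show ?case using GT_top_row[OF G s] by auto
next
  case (step n)
  from step.IH have B: "\<And>p. p \<in> {1..Suc n} \<Longrightarrow> lam s (Suc n) p = 0 \<or> lam s (Suc n) p = 1"
    and M: "\<And>p q. 1 \<le> p \<Longrightarrow> p \<le> q \<Longrightarrow> q \<le> Suc n \<Longrightarrow> lam s (Suc n) q \<le> lam s (Suc n) p"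
    by auto
  have I: "\<And>p. p \<in> {1..n} \<Longrightarrow> lam s n p \<le> lam s (Suc n) p \<and> lam s (Suc n) (p+1) \<le> lam s n p"
    using GT_interlacing[OF G s, of "Suc n"] step.hyps by auto
  have "lam s n p = 0 \<or> lam s n p = 1" if "p \<in> {1..n}" for p
    using I[OF that] B[of p] B[of "p+1"] that by auto
  moreover have "lam s n q \<le> lam s n p" if "1 \<le> p" "p < q" "q \<le> n" for p q
  proof -
    have "lam s n q \<le> lam s (Suc n) q" using I[of q] that by auto
    also have "\<dots> \<le> lam s (Suc n) (p+1)" using M[of "p+1" q] that by auto
    also have "\<dots> \<le> lam s n p" using I[of p] that by auto
    finally show ?thesis .
  qed
  ultimately show ?case by (metis order.order_iff_strict order_refl)
qed

lemma lcnt_le: "lcnt lam s j \<le> j"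
proof -
  have "card {p \<in> {1..j}. lam s j p = 1} \<le> card {1..j}" by (rule card_mono) auto
  then show ?thesis unfolding lcnt_def by simp
qed

lemma GT_row_indicator:
  assumes G: "lam \<in> GT N l pp" and s: "s \<in> {1..l}" and "j \<le> N" and "1 \<le> p"
  shows "lam s j p = (if p \<le> lcnt lam s j then 1 else 0)"
proof (cases "p \<le> j")
  case False
  then show ?thesis using GT_outside[OF G] lcnt_le[of lam s j] by auto
next
  case True
  let ?S = "{q \<in> {1..j}. lam s j q = 1}"
  note row = GT_row_01_antimono[OF G s \<open>j \<le> N\<close>]
  show ?thesis
  proof (cases "lam s j p = 1")
    case True
    have "{1..p} \<subseteq> ?S"
    proof
      fix q assume q: "q \<in> {1..p}"
      then have "lam s j p \<le> lam s j q" and "lam s j q = 0 \<or> lam s j q = 1"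
        using row \<open>p \<le> j\<close> by auto
      then show "q \<in> ?S" using q True \<open>p \<le> j\<close> by auto
    qed
    then have "p \<le> lcnt lam s j" unfolding lcnt_def using card_mono[of ?S "{1..p}"] by auto
    then show ?thesis using True by simp
  next
    case False
    then have z: "lam s j p = 0" using row \<open>p \<le> j\<close> \<open>1 \<le> p\<close> by auto
    have "?S \<subseteq> {1..p-1}"
    proof
      fix q assume q: "q \<in> ?S"
      have "\<not> p \<le> q"
      proof
        assume "p \<le> q"
        moreover have "q \<le> j" using q by simp
        ultimately have "lam s j q \<le> lam s j p" using row \<open>1 \<le> p\<close> by blast
        then show False using q z by simp
      qed
      then show "q \<in> {1..p-1}" using q by auto
    qed
    then have "lcnt lam s j \<le> p - 1" unfolding lcnt_def using card_mono[of "{1..p-1}" ?S] by auto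
    then show ?thesis using z \<open>1 \<le> p\<close> by auto
  qed
qed

lemma lcnt_interlacing:
  assumes G: "lam \<in> GT N l pp" and s: "s \<in> {1..l}" and "Suc j \<le> N"
  shows "lcnt lam s j \<le> lcnt lam s (Suc j) \<and> lcnt lam s (Suc j) \<le> lcnt lam s j + 1"
proof (cases "j = 0")
  case True
  then show ?thesis using lcnt_le[of lam s "Suc j"] lcnt_le[of lam s j] by simp
next
  case False
  let ?m = "lcnt lam s j" and ?m' = "lcnt lam s (Suc j)"
  have R: "\<And>jj q. jj \<le> N \<Longrightarrow> 1 \<le> q \<Longrightarrow> lam s jj q = (if q \<le> lcnt lam s jj then 1 else 0)"
    using GT_row_indicator[OF G s] by blast
  have I: "\<And>p. p \<in> {1..j} \<Longrightarrow> lam s j p \<le> lam s (Suc j) p \<and> lam s (Suc j) (p+1) \<le> lam s j p"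
    using GT_interlacing[OF G s, of "Suc j"] assms(3) False by auto
  have "?m \<le> ?m'"
  proof (cases "?m = 0")
    case False
    then have "?m \<in> {1..j}" using lcnt_le[of lam s j] by auto
    from I[OF this] R[of j ?m] R[of "Suc j" ?m] assms(3) False show ?thesis
      by (auto split: if_splits)
  qed simp
  moreover have "?m' \<le> ?m + 1"
  proof (rule ccontr)
    assume "\<not> ?m' \<le> ?m + 1"
    then have h: "?m + 2 \<le> ?m'" by simp
    then have "?m + 1 \<in> {1..j}" using lcnt_le[of lam s "Suc j"] by auto
    from I[OF this] R[of j "?m+1"] R[of "Suc j" "?m+2"] assms(3) h show False
      by (auto split: if_splits)
  qed
  ultimately show ?thesis by simp
qed

lemma shift_GT_index:
  assumes "lam \<in> GT N l pp" and "shift lam s i p c \<in> GT N l pp" and "c \<noteq> 0"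
    and "1 \<le> i" and "i \<le> N"
  shows "s \<in> {1..l}" and "p \<in> {1..i}"
proof -
  have "1 \<le> s \<and> s \<le> l \<and> 1 \<le> p \<and> p \<le> i"
    using GT_outside[OF assms(1), of s i p] GT_outside[OF assms(2), of s i p] assms(3-5)
    unfolding shift_def by auto
  then show "s \<in> {1..l}" and "p \<in> {1..i}" by auto
qed

lemma Rset_lcnt:
  assumes G: "lam \<in> GT N l pp" and sp: "(s, p) \<in> Rset N l pp lam i" and "1 \<le> i" "i + 1 \<le> N"
  shows "s \<in> {1..l}" "p \<in> {1..i}" "lcnt lam s i = p - 1" "lcnt lam s (i+1) = p"
proof -
  let ?lam' = "shift lam s i p 1"
  have G': "?lam' \<in> GT N l pp" using sp unfolding Rset_def by simp
  show s: "s \<in> {1..l}" and p: "p \<in> {1..i}"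
    using shift_GT_index[OF G G'] assms(3,4) by simp_all
  have iN: "i \<le> N" using assms(4) by simp
  have row: "\<And>j q. j \<le> N \<Longrightarrow> 1 \<le> q \<Longrightarrow> lam s j q = (if q \<le> lcnt lam s j then 1 else 0)"
    and row': "\<And>j q. j \<le> N \<Longrightarrow> 1 \<le> q \<Longrightarrow> ?lam' s j q = (if q \<le> lcnt ?lam' s j then 1 else 0)"
    using GT_row_indicator[OF G s] GT_row_indicator[OF G' s] by blast+
  have zero: "lam s i p = 0" and gt: "lcnt lam s i < p"
    using row[OF iN, of p] row'[OF iN, of p] p unfolding shift_def by (auto split: if_splits)
  have "p \<le> lcnt lam s i + 1"
  proof (cases "p \<ge> 2")
    case True
    then have p1: "1 \<le> p - 1" by simp
    have "?lam' s i (p - 1) = 1"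
      using row'[OF iN, of p] row'[OF iN p1] zero p True unfolding shift_def
      by (auto split: if_splits)
    then have "lam s i (p - 1) = 1" using True unfolding shift_def by (auto split: if_splits)
    then show ?thesis using row[OF iN p1] by (auto split: if_splits)
  qed (use gt in auto)
  with gt show m: "lcnt lam s i = p - 1" by simp
  have "?lam' s i p \<le> ?lam' s (i+1) p"
    using GT_interlacing[OF G' s, of "i+1" p] p assms(3,4) by auto
  then have "1 \<le> lam s (i+1) p" using zero unfolding shift_def by auto
  then have "p \<le> lcnt lam s (i+1)" using row[OF assms(4), of p] p by (auto split: if_splits)
  moreover have "lcnt lam s (i+1) \<le> lcnt lam s i + 1"
    using lcnt_interlacing[OF G s, of i] assms(4) by simp
  ultimately show "lcnt lam s (i+1) = p" using m p by simp
qed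

lemma Aset_lcnt:
  assumes G: "lam \<in> GT N l pp" and sp: "(s, p) \<in> Aset N l pp lam i" and "1 \<le> i" "i \<le> N"
  shows "s \<in> {1..l}" "p \<in> {1..i}" "lcnt lam s i = p" "lcnt lam s (i-1) = p - 1"
proof -
  let ?lam' = "shift lam s i p (-1)"
  have G': "?lam' \<in> GT N l pp" using sp unfolding Aset_def by simp
  show s: "s \<in> {1..l}" and p: "p \<in> {1..i}"
    using shift_GT_index[OF G G'] assms(3,4) by simp_all
  have row: "\<And>j q. j \<le> N \<Longrightarrow> 1 \<le> q \<Longrightarrow> lam s j q = (if q \<le> lcnt lam s j then 1 else 0)"
    and row': "\<And>j q. j \<le> N \<Longrightarrow> 1 \<le> q \<Longrightarrow> ?lam' s j q = (if q \<le> lcnt ?lam' s j then 1 else 0)"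
    using GT_row_indicator[OF G s] GT_row_indicator[OF G' s] by blast+
  have one: "lam s i p = 1" and le: "p \<le> lcnt lam s i" and not_le: "\<not> p \<le> lcnt ?lam' s i"
    using row[OF assms(4), of p] row'[OF assms(4), of p] p unfolding shift_def
    by (auto split: if_splits)
  have "lcnt lam s i \<le> p"
  proof (cases "p + 1 \<le> i")
    case True
    have "?lam' s i (p + 1) = 0" using row'[OF assms(4), of "p+1"] not_le by auto
    then have "lam s i (p + 1) = 0" unfolding shift_def by (auto split: if_splits)
    then show ?thesis using row[OF assms(4), of "p + 1"] by (auto split: if_splits)
  qed (use lcnt_le[of lam s i] in auto)
  with le show m: "lcnt lam s i = p" by simp
  have "lcnt lam s (i-1) \<le> p - 1"
  proof (cases "p \<le> i - 1")
    case True
    have "?lam' s (i-1) p \<le> ?lam' s i p"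
      using GT_interlacing[OF G' s, of i p] p True assms(4) by auto
    then have "lam s (i-1) p \<le> 0" using one True assms(3) unfolding shift_def by (auto split: if_splits)
    then show ?thesis using row[of "i-1" p] assms(4) p by (auto split: if_splits)
  qed (use lcnt_le[of lam s "i-1"] p in auto)
  moreover have "lcnt lam s i \<le> lcnt lam s (i-1) + 1"
    using lcnt_interlacing[OF G s, of "i-1"] assms(3,4) by simp
  ultimately show "lcnt lam s (i-1) = p - 1" using m by simp
qed

lemma nu_diff_row_shift:
  assumes "lam \<in> GT N l pp" and "s' \<in> {1..l}" and "i \<le> N" and "q \<in> {1..i}"
  shows "nu N pp r lam s i p - nu N pp r lam s' i q
       = hb * of_int (row_shift (int p - lam s i p) (lcnt lam s' i) q) - (aa N pp r s - aa N pp r s')"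
  using GT_row_indicator[OF assms(1-3), of q] assms(4)
  unfolding nu_def row_shift_def by (simp add: algebra_simps)

lemma prod_Lp_row_shift:
  assumes "lam \<in> GT N l pp" and "s' \<in> {1..l}" and "i + 1 \<le> N"
  shows "(\<Prod>q\<in>{1..i+1}. Lp N pp r lam s i p s' q)
       = (\<Prod>q\<in>{1..i+1}. hb * of_int (row_shift (int p) (lcnt lam s' (i+1)) q) - (aa N pp r s - aa N pp r s'))"
  using GT_row_indicator[OF assms] unfolding Lp_def row_shift_def
  by (intro prod.cong) auto

lemma prod_Lm_row_shift:
  assumes "lam \<in> GT N l pp" and "s' \<in> {1..l}" and "i \<le> N"
  shows "(\<Prod>q\<in>{1..i-1}. Lm N pp r lam s i p s' q)
       = (\<Prod>q\<in>{1..i-1}. hb * of_int (row_shift (int p - 1) (lcnt lam s' (i-1)) q) - (aa N pp r s - aa N pp r s'))"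
  using GT_row_indicator[OF assms(1,2), of "i-1"] assms(3) unfolding Lm_def row_shift_def
  by (intro prod.cong) auto

lemma Rset_quotient_same:
  assumes G: "lam \<in> GT N l pp" and sp: "(s, p) \<in> Rset N l pp lam i" and "1 \<le> i" "i + 1 \<le> N"
  shows "(\<Prod>q\<in>{1..i+1}. Lp N pp r lam s i p s q)
          / (\<Prod>q\<in>{1..i} - {p}. nu N pp r lam s i p - nu N pp r lam s i q)
        = hb ^ 2 * of_int (int p - int i - 1)"
proof -
  note R = Rset_lcnt[OF assms]
  define F where "F = (\<lambda>k::int. hb * of_int k)"
  have zero: "lam s i p = 0" using GT_row_indicator[OF G R(1), of i p] R(2,3) assms(4) by auto
  have "(\<Prod>q\<in>{1..i} - {p}. nu N pp r lam s i p - nu N pp r lam s i q)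
      = (\<Prod>q\<in>{1..i} - {p}. F (row_shift (int p) (p - 1) q))"
    using nu_diff_row_shift[where i=i and p=p and r=r and s=s, OF G R(1)] R(3) zero assms(4) unfolding F_def
    by (intro prod.cong) auto
  moreover have "(\<Prod>q\<in>{1..i+1}. Lp N pp r lam s i p s q) = (\<Prod>q\<in>{1..i+1}. F (row_shift (int p) p q))"
    using prod_Lp_row_shift[where r=r and s=s and p=p, OF G R(1) assms(4)] R(4) unfolding F_def by simp
  moreover have "F k \<noteq> 0" if "k \<noteq> 0" for k
    unfolding F_def using hb_mult_of_int_nonzero[OF that] .
  ultimately show ?thesis
    using prod_row_shift_quotient_succ_diag[of F p i] R(2)
    by (simp add: F_def power2_eq_square algebra_simps)
qed

lemma Rset_quotient_other:
  assumes G: "lam \<in> GT N l pp" and sp: "(s, p) \<in> Rset N l pp lam i" and "1 \<le> i" "i + 1 \<le> N"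
    and s': "s' \<in> {1..l}" "s' \<noteq> s" and r: "inj_on r {1..l}"
  defines "D \<equiv> aa N pp r s - aa N pp r s'"
    and "Q \<equiv> (\<Prod>q\<in>{1..i+1}. Lp N pp r lam s i p s' q)
             / (\<Prod>q\<in>{1..i}. nu N pp r lam s i p - nu N pp r lam s' i q)"
    and "n \<equiv> lcnt lam s' i" and "n' \<equiv> lcnt lam s' (i+1)"
  shows "n' = n \<Longrightarrow> Q = hb * of_int (int p - int i - 1) - D"
    and "n' = n + 1 \<Longrightarrow> n = i \<Longrightarrow> Q = hb * of_int (int p - int i) - D"
    and "n' = n + 1 \<Longrightarrow> n \<noteq> i \<Longrightarrow>
         Q = (hb * of_int (int p - int n) - D) * (hb * of_int (int p - int i - 1) - D)
             / (hb * of_int (int p - int n - 1) - D)"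
proof -
  note R = Rset_lcnt[OF G sp assms(3,4)]
  define F where "F = (\<lambda>k::int. hb * of_int k - D)"
  have "r s \<noteq> r s'" using inj_onD[OF r _ R(1) s'(1)] s'(2) by auto
  from hb_mult_of_int_minus_aa_nonzero[OF _ this] assms(4)
  have nz: "F k \<noteq> 0" for k
    unfolding F_def D_def by simp
  have zero: "lam s i p = 0" using GT_row_indicator[OF G R(1), of i p] R(2,3) assms(4) by auto
  have "(\<Prod>q\<in>{1..i}. nu N pp r lam s i p - nu N pp r lam s' i q) = (\<Prod>q\<in>{1..i}. F (row_shift (int p) n q))"
    using nu_diff_row_shift[where i=i and p=p and r=r and s=s, OF G s'(1)] zero assms(4) unfolding F_def D_def n_def
    by (intro prod.cong) auto
  moreover have "(\<Prod>q\<in>{1..i+1}. Lp N pp r lam s i p s' q) = (\<Prod>q\<in>{1..i+1}. F (row_shift (int p) n' q))"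
    using prod_Lp_row_shift[where r=r and s=s and p=p, OF G s'(1) assms(4)] unfolding F_def D_def n'_def by simp
  ultimately have Q: "Q = F (int p - int n) * F (int p - int i - 1) / F (int p - int n')"
    unfolding Q_def using prod_row_shift_quotient_succ[where F=F and c="int p" and n=i and m=n and m'=n', OF nz] lcnt_le
    unfolding n_def n'_def by simp
  have succ: "Q = F (int p - int n) * F (int p - int i - 1) / F (int p - int n - 1)" if "n' = n + 1"
  proof -
    from that have "int p - int n' = int p - int n - 1" by simp
    then show ?thesis unfolding Q by (rule arg_cong)
  qed
  have "Q = F (int p - int i - 1)" if "n' = n"
    using nz that by (simp add: Q)
  then show "n' = n \<Longrightarrow> Q = hb * of_int (int p - int i - 1) - D"
    unfolding F_def .
  have "Q = F (int p - int i)" if "n' = n + 1" "n = i"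
    using nz succ[OF that(1)] that(2) by simp
  then show "n' = n + 1 \<Longrightarrow> n = i \<Longrightarrow> Q = hb * of_int (int p - int i) - D"
    unfolding F_def .
  show "n' = n + 1 \<Longrightarrow> n \<noteq> i \<Longrightarrow>
         Q = (hb * of_int (int p - int n) - D) * (hb * of_int (int p - int i - 1) - D)
             / (hb * of_int (int p - int n - 1) - D)"
    using succ unfolding F_def by blast
qed

lemma Aset_quotient_same:
  assumes G: "lam \<in> GT N l pp" and sp: "(s, p) \<in> Aset N l pp lam i" and "1 \<le> i" "i \<le> N"
  shows "(\<Prod>q\<in>{1..i-1}. Lm N pp r lam s i p s q)
          / (\<Prod>q\<in>{1..i} - {p}. nu N pp r lam s i p - nu N pp r lam s i q)
        = - (1 / of_int (int p - int i - 1))"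
proof -
  note A = Aset_lcnt[OF assms]
  define F where "F = (\<lambda>k::int. hb * of_int k)"
  have one: "lam s i p = 1" using GT_row_indicator[OF G A(1), of i p] A(2,3) assms(4) by auto
  have "(\<Prod>q\<in>{1..i} - {p}. nu N pp r lam s i p - nu N pp r lam s i q)
      = (\<Prod>q\<in>{1..i} - {p}. F (row_shift (int p - 1) p q))"
    using nu_diff_row_shift[where i=i and p=p and r=r and s=s, OF G A(1)] A(3) one assms(4) unfolding F_def
    by (intro prod.cong) auto
  moreover have "(\<Prod>q\<in>{1..i-1}. Lm N pp r lam s i p s q) = (\<Prod>q\<in>{1..i-1}. F (row_shift (int p - 1) (p - 1) q))"
    using prod_Lm_row_shift[where r=r and s=s and p=p, OF G A(1) assms(4)] A(4) unfolding F_def by simp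
  moreover have "F k \<noteq> 0" if "k \<noteq> 0" for k
    unfolding F_def using hb_mult_of_int_nonzero[OF that] .
  moreover have "F (-1) / F (int p - 1 - int i) = - (1 / of_int (int p - int i - 1))"
    using hb_nonzero by (simp add: F_def)
  ultimately show ?thesis
    using prod_row_shift_quotient_pred_diag[of F p i] A(2) by simp
qed

lemma Aset_quotient_other:
  assumes G: "lam \<in> GT N l pp" and sp: "(s, p) \<in> Aset N l pp lam i" and "1 \<le> i" "i \<le> N"
    and s': "s' \<in> {1..l}" "s' \<noteq> s" and r: "inj_on r {1..l}"
  defines "D \<equiv> aa N pp r s - aa N pp r s'"
    and "Q \<equiv> (\<Prod>q\<in>{1..i-1}. Lm N pp r lam s i p s' q)
             / (\<Prod>q\<in>{1..i}. nu N pp r lam s i p - nu N pp r lam s' i q)"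
    and "n \<equiv> lcnt lam s' i" and "n' \<equiv> lcnt lam s' (i-1)"
  shows "n' = n \<Longrightarrow> Q = 1 / (hb * of_int (int p - int i - 1) - D)"
    and "n' + 1 = n \<Longrightarrow> n = i \<Longrightarrow> Q = 1 / (hb * of_int (int p - int i) - D)"
    and "n' + 1 = n \<Longrightarrow> n \<noteq> i \<Longrightarrow>
         Q = (hb * of_int (int p - int n - 1) - D)
             / ((hb * of_int (int p - int n) - D) * (hb * of_int (int p - int i - 1) - D))"
proof -
  note A = Aset_lcnt[OF G sp assms(3,4)]
  define F where "F = (\<lambda>k::int. hb * of_int k - D)"
  have "r s \<noteq> r s'" using inj_onD[OF r _ A(1) s'(1)] s'(2) by auto
  from hb_mult_of_int_minus_aa_nonzero[OF _ this] assms(3,4)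
  have nz: "F k \<noteq> 0" for k
    unfolding F_def D_def by simp
  have one: "lam s i p = 1" using GT_row_indicator[OF G A(1), of i p] A(2,3) assms(4) by auto
  have "(\<Prod>q\<in>{1..i}. nu N pp r lam s i p - nu N pp r lam s' i q) = (\<Prod>q\<in>{1..i}. F (row_shift (int p - 1) n q))"
    using nu_diff_row_shift[where i=i and p=p and r=r and s=s, OF G s'(1)] one assms(4) unfolding F_def D_def n_def
    by (intro prod.cong) auto
  moreover have "(\<Prod>q\<in>{1..i-1}. Lm N pp r lam s i p s' q) = (\<Prod>q\<in>{1..i-1}. F (row_shift (int p - 1) n' q))"
    using prod_Lm_row_shift[where r=r and s=s and p=p, OF G s'(1) assms(4)] unfolding F_def D_def n'_def by simp
  moreover have shift_eq: "int p - 1 - int k = int p - int k - 1" for k by simp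
  ultimately have Q: "Q = F (int p - int n - 1) / (F (int p - int i - 1) * F (int p - int n' - 1))"
    unfolding Q_def
    using prod_row_shift_quotient_pred[where F=F and c="int p - 1" and n=i and m=n and m'=n', OF nz assms(3),
        unfolded shift_eq] lcnt_le
    unfolding n_def n'_def by simp
  have pred: "Q = F (int p - int n - 1) / (F (int p - int n) * F (int p - int i - 1))" if "n' + 1 = n"
  proof -
    from that have "int p - int n' - 1 = int p - int n" by simp
    then show ?thesis unfolding Q by (simp only: mult.commute)
  qed
  have "Q = 1 / F (int p - int i - 1)" if "n' = n"
    using nz that by (simp add: Q)
  then show "n' = n \<Longrightarrow> Q = 1 / (hb * of_int (int p - int i - 1) - D)"
    unfolding F_def .
  have "Q = 1 / F (int p - int i)" if "n' + 1 = n" "n = i"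
    using nz pred[OF that(1)] that(2) by simp
  then show "n' + 1 = n \<Longrightarrow> n = i \<Longrightarrow> Q = 1 / (hb * of_int (int p - int i) - D)"
    unfolding F_def .
  show "n' + 1 = n \<Longrightarrow> n \<noteq> i \<Longrightarrow>
         Q = (hb * of_int (int p - int n - 1) - D)
             / ((hb * of_int (int p - int n) - D) * (hb * of_int (int p - int i - 1) - D))"
    using pred unfolding F_def by blast
qed

theorem lemma3p2:
  fixes N l i :: nat and pp :: "nat \<Rightarrow> nat" and r :: "nat \<Rightarrow> int" and lam :: pattern
  assumes "N \<ge> 2" and "l \<ge> 1"
    and "\<forall>s\<in>{1..l}. 1 \<le> pp s \<and> pp s \<le> N"
    and "\<forall>s\<in>{1..l}. \<forall>s'\<in>{1..l}. s < s' \<longrightarrow> r s < r s'"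
    and "lam \<in> GT N l pp"
    and "1 \<le> i" and "i \<le> N - 1"
  shows
   "(\<forall>(s, p) \<in> Rset N l pp lam i.
      (\<Prod>p'\<in>{1..i+1}. Lp N pp r lam s i p s p')
        / (\<Prod>p'\<in>{1..i} - {p}. nu N pp r lam s i p - nu N pp r lam s i p')
        = hb ^ 2 * of_int (int p - int i - 1)
      \<and> (\<forall>s'\<in>{1..l}. s' \<noteq> s \<longrightarrow>
          (let D = aa N pp r s - aa N pp r s';
               Q = (\<Prod>p'\<in>{1..i+1}. Lp N pp r lam s i p s' p')
                   / (\<Prod>p'\<in>{1..i}. nu N pp r lam s i p - nu N pp r lam s' i p');
               li = lcnt lam s' i; li1 = lcnt lam s' (i+1)
           in (li1 = li \<longrightarrow> Q = hb * of_int (int p - int i - 1) - D)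
            \<and> (li1 = li + 1 \<and> li = i \<longrightarrow> Q = hb * of_int (int p - int i) - D)
            \<and> (li1 = li + 1 \<and> li \<noteq> i \<longrightarrow>
                 Q = (hb * of_int (int p - int li) - D) * (hb * of_int (int p - int i - 1) - D)
                     / (hb * of_int (int p - int li - 1) - D)))))
    \<and> (\<forall>(s, p) \<in> Aset N l pp lam i.
      (\<Prod>p'\<in>{1..i-1}. Lm N pp r lam s i p s p')
        / (\<Prod>p'\<in>{1..i} - {p}. nu N pp r lam s i p - nu N pp r lam s i p')
        = - (1 / of_int (int p - int i - 1))
      \<and> (\<forall>s'\<in>{1..l}. s' \<noteq> s \<longrightarrow>
          (let D = aa N pp r s - aa N pp r s';
               Q = (\<Prod>p'\<in>{1..i-1}. Lm N pp r lam s i p s' p')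
                   / (\<Prod>p'\<in>{1..i}. nu N pp r lam s i p - nu N pp r lam s' i p');
               li = lcnt lam s' i; lim = lcnt lam s' (i-1)
           in (lim = li \<longrightarrow> Q = 1 / (hb * of_int (int p - int i - 1) - D))
            \<and> (lim + 1 = li \<and> li = i \<longrightarrow> Q = 1 / (hb * of_int (int p - int i) - D))
            \<and> (lim + 1 = li \<and> li \<noteq> i \<longrightarrow>
                 Q = (hb * of_int (int p - int li - 1) - D)
                     / ((hb * of_int (int p - int li) - D) * (hb * of_int (int p - int i - 1) - D))))))"
proof -
  have iN: "i + 1 \<le> N" "i \<le> N" using assms(6,7) by simp_all
  have r_inj: "inj_on r {1..l}"
    using assms(4) by (intro strict_mono_on_imp_inj_on strict_mono_onI) auto
  note R = Rset_quotient_same[OF assms(5) _ assms(6) iN(1)]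
    Rset_quotient_other[OF assms(5) _ assms(6) iN(1) _ _ r_inj]
  note A = Aset_quotient_same[OF assms(5) _ assms(6) iN(2)]
    Aset_quotient_other[OF assms(5) _ assms(6) iN(2) _ _ r_inj]
  show ?thesis
    unfolding Let_def using R A by fastforce
qed

end
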